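(* Let $n\ge4$, $\mathfrak g=\mathfrak{so}(2n+1,\mathbb C)$, and let $\mathfrak q=\mathfrak l\oplus\mathfrak n$ be the maximal parabolic subalgebra of type $B_n(n-1)$ (determined by $\alpha_{n-1}$). Let $V(\mu+\epsilon_{n\gamma})=\mathfrak l_{n\gamma}\otimes\mathfrak z(\mathfrak n)$. Then the $\mathfrak l$-intertwining operator $\tilde\tau_2|_{V(\mu+\epsilon_{n\gamma})^*}:V(\mu+\epsilon_{n\gamma})^*\to\mathcal P^2(\mathfrak g(1))$ is not identically zero.
   Context: Type $B_n$: $\mathfrak g=\mathfrak{so}(2n+1,\mathbb C)$ with Cartan $\mathfrak h$, roots $\pm\varepsilon_j\pm\varepsilon_k$ ($j<k$) and $\pm\varepsilon_j$, simple roots $\alpha_j=\varepsilon_j-\varepsilon_{j+1}$ ($j<n$), $\alpha_n=\varepsilon_n$, Killing form $\kappa$, root vectors $X_\alpha$. $\mathfrak q=\mathfrak l\oplus\mathfrak n$ is the standard maximal parabolic subalgebra determined by $\alpha_{n-1}$: $\mathfrak l$ is $\mathfrak h$ plus root spaces of roots in the span of $\Pi\setminus\{\alpha_{n-1}\}$. Grading by the $\alpha_{n-1}$-coefficient: $\mathfrak g=\bigoplus_{j=-2}^2\mathfrak g(j)$, $\mathfrak l=\mathfrak g(0)$, $\Delta(\mathfrak g(1))=\{\varepsilon_j\pm\varepsilon_n,\ \varepsilon_j : 1\le j\le n-1\}$, $\mathfrak z(\mathfrak n)=\mathfrak g(2)$ with roots $\varepsilon_j+\varepsilon_k$ ($1\le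 j<k\le n-1$), $\bar{\mathfrak n}=\mathfrak g(-1)\oplus\mathfrak g(-2)$, $\mathfrak z(\bar{\mathfrak n})=\mathfrak g(-2)$. The highest weight of $\mathfrak g(1)$ is $\mu=\varepsilon_1+\varepsilon_n$. $\mathfrak l_{n\gamma}=\mathrm{span}\{X_{\varepsilon_n},[X_{\varepsilon_n},X_{-\varepsilon_n}],X_{-\varepsilon_n}\}\cong\mathfrak{sl}(2,\mathbb C)$ is the simple ideal of $[\mathfrak l,\mathfrak l]$ corresponding to $\alpha_n$; $\mathfrak l_{n\gamma}\otimes\mathfrak z(\mathfrak n)$ is an irreducible $\mathfrak l$-module, denoted $V(\mu+\epsilon_{n\gamma})$, of highest weight $\varepsilon_1+\varepsilon_2+\varepsilon_n$. $\omega=\sum_{\gamma\in\Delta(\mathfrak z(\mathfrak n))}X^*_\gamma\otimes X_\gamma$ where $X^*_\gamma\in\mathfrak g_{-\gamma}$, $\kappa(X^*_\gamma,X_{\gamma'})=\delta_{\gamma\gamma'}$; $\tau_2:\mathfrak g(1)\to\mathfrak l\otimes\mathfrak z(\mathfrak n)$, $\tau_2(X)=\tfrac12(\mathrm{ad}(X)^2\otimes\mathrm{Id})\omega$. For an irreducible constituent $W$ of $\mathfrak l\otimes\mathfrak z(\mathfrak n)$ its dual $W^*$ is realized in $\mathfrak l\otimes\mathfrak z(\bar{\mathfrak n})$ via $(A\otimes B)(C\otimes D)=\kappa(A,C)\kappa(B,D)$, and $\tilde\tau_2|_{W^*}:W^*\to\mathcal P^2(\mathfrak g(1))$ (quadratic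 polynomials on $\mathfrak g(1)$) is $\tilde\tau_2(Y^* )(X)=Y^*(\tau_2(X))$. *)

theory Defs
  imports Complex_Main
begin

text \<open>Matrices are functions nat => nat => complex,
  supported on indices below N = 2n+1.  Index 0 stands for e_0, index i (1 <= i <= n)
  for e_i and index n+i for e_{-i}.  The invariant symmetric form pairs e_i with e_{-i}
  and e_0 with itself.\<close>

type_synonym cmat = "nat \<Rightarrow> nat \<Rightarrow> complex"
type_synonym ctens = "nat \<Rightarrow> nat \<Rightarrow> nat \<Rightarrow> nat \<Rightarrow> complex"

definition dimN :: "nat \<Rightarrow> nat" where
  "dimN n = 2 * n + 1"

definition mmul :: "nat \<Rightarrow> cmat \<Rightarrow> cmat \<Rightarrow> cmat" where
  "mmul n A B = (\<lambda>i j. \<Sum>k<dimN n. A i k * B k j)"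

definition mtrans :: "cmat \<Rightarrow> cmat" where
  "mtrans A = (\<lambda>i j. A j i)"

definition madd :: "cmat \<Rightarrow> cmat \<Rightarrow> cmat" where
  "madd A B = (\<lambda>i j. A i j + B i j)"

definition msmul :: "complex \<Rightarrow> cmat \<Rightarrow> cmat" where
  "msmul c A = (\<lambda>i j. c * A i j)"

definition mzero :: cmat where
  "mzero = (\<lambda>i j. 0)"

definition supp_in :: "nat \<Rightarrow> cmat \<Rightarrow> bool" where
  "supp_in n A \<longleftrightarrow> (\<forall>i j. (dimN n \<le> i \<or> dimN n \<le> j) \<longrightarrow> A i j = 0)"

definition dualidx :: "nat \<Rightarrow> nat \<Rightarrow> nat" where
  "dualidx n i = (if i = 0 then 0 else if i \<le> n then i + n else i - n)"

definition Jform :: "nat \<Rightarrow> cmat" where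
  "Jform n = (\<lambda>i j. if i < dimN n \<and> j < dimN n \<and> j = dualidx n i then 1 else 0)"

definition soalg :: "nat \<Rightarrow> cmat set" where
  "soalg n = {A. supp_in n A \<and>
      (\<forall>i j. madd (mmul n (mtrans A) (Jform n)) (mmul n (Jform n) A) i j = 0)}"

definition bracket :: "nat \<Rightarrow> cmat \<Rightarrow> cmat \<Rightarrow> cmat" where
  "bracket n A B = (\<lambda>i j. mmul n A B i j - mmul n B A i j)"

definition mtrace :: "nat \<Rightarrow> cmat \<Rightarrow> complex" where
  "mtrace n A = (\<Sum>i<dimN n. A i i)"

definition kill :: "nat \<Rightarrow> cmat \<Rightarrow> cmat \<Rightarrow> complex" where
  "kill n A B = (2 * of_nat n - 1) * mtrace n (mmul n A B)"

definition cartan :: "nat \<Rightarrow> cmat set" where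
  "cartan n = {H \<in> soalg n. \<forall>i j. i \<noteq> j \<longrightarrow> H i j = 0}"

text \<open>Root (weight) space of a functional alpha on the Cartan subalgebra.
  The weight eps_j is H |-> H j j (1 <= j <= n).\<close>
definition rootspace :: "nat \<Rightarrow> (cmat \<Rightarrow> complex) \<Rightarrow> cmat set" where
  "rootspace n \<alpha> = {X \<in> soalg n. \<forall>H \<in> cartan n. bracket n H X = msmul (\<alpha> H) X}"

text \<open>Grading element: the fundamental coweight of alpha_{n-1}, i.e. H0 with
  eps_j(H0) = 1 for j <= n-1 and eps_n(H0) = 0; alpha(H0) is the alpha_{n-1}-coefficient
  of a root alpha.\<close>
definition H0 :: "nat \<Rightarrow> cmat" where
  "H0 n = (\<lambda>i j. if i = j \<and> 1 \<le> i \<and> i \<le> n - 1 then 1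
                 else if i = j \<and> n + 1 \<le> i \<and> i \<le> 2 * n - 1 then -1 else 0)"

text \<open>g(k): the sum of root spaces whose alpha_{n-1}-coefficient is k (plus h for k = 0).\<close>
definition grade :: "nat \<Rightarrow> int \<Rightarrow> cmat set" where
  "grade n k = {X \<in> soalg n. bracket n (H0 n) X = msmul (of_int k) X}"

definition lngamma :: "nat \<Rightarrow> cmat set" where
  "lngamma n = {madd (madd a b) (bracket n c d) | a b c d.
       a \<in> rootspace n (\<lambda>H. H n n) \<and> c \<in> rootspace n (\<lambda>H. H n n) \<and>
       b \<in> rootspace n (\<lambda>H. - H n n) \<and> d \<in> rootspace n (\<lambda>H. - H n n)}"

text \<open>Tensors in gl(N) (x) gl(N) as 4-index arrays; A (x) B = (i,j,k,l) |-> A i j * B k l.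
  tens_span S T is the linear span of pure tensors S (x) T.\<close>
definition tensor :: "cmat \<Rightarrow> cmat \<Rightarrow> ctens" where
  "tensor A B = (\<lambda>i j k l. A i j * B k l)"

definition tens_span :: "cmat set \<Rightarrow> cmat set \<Rightarrow> ctens set" where
  "tens_span S T = {(\<lambda>i j k l. \<Sum>r<(m::nat). tensor (A r) (B r) i j k l) | m A B.
       \<forall>r<m. A r \<in> S \<and> B r \<in> T}"

text \<open>Pairing (A (x) B)(C (x) D) = kappa(A,C) kappa(B,D), extended bilinearly.\<close>
definition tpair :: "nat \<Rightarrow> ctens \<Rightarrow> ctens \<Rightarrow> complex" where
  "tpair n Y W = (2 * of_nat n - 1)^2 *
     (\<Sum>i<dimN n. \<Sum>j<dimN n. \<Sum>k<dimN n. \<Sum>l<dimN n. Y i j k l * W j i l k)"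

text \<open>Roots of z(n) = g(2): eps_a + eps_b with 1 <= a < b <= n-1.\<close>
definition zroots :: "nat \<Rightarrow> (nat \<times> nat) set" where
  "zroots n = {(a, b). 1 \<le> a \<and> a < b \<and> b \<le> n - 1}"

text \<open>V(mu + eps_{n gamma}) = l_{n gamma} (x) z(n), and its dual realized in
  l (x) z(nbar) as l_{n gamma} (x) z(nbar).\<close>
definition Vmod :: "nat \<Rightarrow> ctens set" where
  "Vmod n = tens_span (lngamma n) (grade n 2)"

definition Vstar :: "nat \<Rightarrow> ctens set" where
  "Vstar n = tens_span (lngamma n) (grade n (-2))"

text \<open>tau_2(x) = 1/2 (ad(x)^2 (x) Id) omega, omega = sum_gamma X*_gamma (x) X_gamma.\<close>
definition tau2 :: "nat \<Rightarrow> (nat \<Rightarrow> nat \<Rightarrow> cmat) \<Rightarrow> (nat \<Rightarrow> nat \<Rightarrow> cmat) \<Rightarrow> cmat \<Rightarrow> ctens" where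
  "tau2 n Xr Xs x = (\<lambda>i j k l. (1/2) * (\<Sum>(a, b) \<in> zroots n.
       tensor (bracket n x (bracket n x (Xs a b))) (Xr a b) i j k l))"

end

theory Submission
  imports Defs
begin

text \<open>Take \<open>Y = X\<^sub>\<epsilon>\<^sub>n \<otimes> X*\<^sub>\<epsilon>\<^sub>1\<^sub>+\<^sub>\<epsilon>\<^sub>2\<close> in \<open>V(\<mu> + \<epsilon>\<^sub>n\<^sub>\<gamma>)*\<close> and
  \<open>x = X\<^sub>\<epsilon>\<^sub>1 + X\<^sub>\<epsilon>\<^sub>2\<^sub>-\<^sub>\<epsilon>\<^sub>n\<close> in \<open>g(1)\<close>. Then
  \<open>Y(\<tau>\<^sub>2(x)) = 1/2 \<Sum>\<^sub>\<gamma> \<kappa>(X\<^sub>\<epsilon>\<^sub>n, ad(x)\<^sup>2 X*\<^sub>\<gamma>) \<kappa>(X*\<^sub>\<epsilon>\<^sub>1\<^sub>+\<^sub>\<epsilon>\<^sub>2, X\<^sub>\<gamma>)\<close>.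
  The Killing form pairs a root space only with the opposite one, so only
  \<open>\<gamma> = \<epsilon>\<^sub>1 + \<epsilon>\<^sub>2\<close> survives, and there the second factor is 1. Since
  \<open>-\<epsilon>\<^sub>1 - \<epsilon>\<^sub>2 + \<epsilon>\<^sub>1 + (\<epsilon>\<^sub>2 - \<epsilon>\<^sub>n) = -\<epsilon>\<^sub>n\<close>, \<open>ad(x)\<^sup>2\<close> maps \<open>X*\<^sub>\<epsilon>\<^sub>1\<^sub>+\<^sub>\<epsilon>\<^sub>2\<close> into
  the root space of \<open>-\<epsilon>\<^sub>n\<close>, and an explicit matrix computation shows that its pairing
  with \<open>X\<^sub>\<epsilon>\<^sub>n\<close> is nonzero.\<close>

definition mat_unit :: "nat \<Rightarrow> nat \<Rightarrow> cmat" where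
  "mat_unit p q = (\<lambda>i j. if i = p \<and> j = q then 1 else 0)"

text \<open>\<open>E(p,q) - E(q',p')\<close> with \<open>i' = dualidx n i\<close>: a root vector of weight
  \<open>\<epsilon>\<^sub>p - \<epsilon>\<^sub>q\<close>, reading \<open>\<epsilon>\<^sub>0 = 0\<close> and \<open>\<epsilon>\<^sub>n\<^sub>+\<^sub>i = -\<epsilon>\<^sub>i\<close>.\<close>
definition so_vec :: "nat \<Rightarrow> nat \<Rightarrow> nat \<Rightarrow> cmat" where
  "so_vec n p q = madd (mat_unit p q) (msmul (-1) (mat_unit (dualidx n q) (dualidx n p)))"

lemma mmul_madd_left: "mmul n (madd A B) C = madd (mmul n A C) (mmul n B C)"
  by (auto simp: mmul_def madd_def distrib_right sum.distrib)

lemma mmul_madd_right: "mmul n C (madd A B) = madd (mmul n C A) (mmul n C B)"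
  by (auto simp: mmul_def madd_def distrib_left sum.distrib)

lemma mmul_msmul_left: "mmul n (msmul c A) C = msmul c (mmul n A C)"
  by (auto simp: mmul_def msmul_def sum_distrib_left mult.assoc)

lemma mmul_msmul_right: "mmul n C (msmul c A) = msmul c (mmul n C A)"
  by (auto simp: mmul_def msmul_def sum_distrib_left mult_ac)

lemma mmul_mat_unit:
  "mmul n (mat_unit p q) (mat_unit r s) = (if q = r \<and> q < dimN n then mat_unit p s else mzero)"
  by (auto simp: mmul_def mat_unit_def mzero_def fun_eq_iff if_distrib[of "\<lambda>x. x * _"]
      cong: if_cong)

lemma msmul_madd: "msmul c (madd A B) = madd (msmul c A) (msmul c B)"
  by (auto simp: msmul_def madd_def distrib_left)

lemma msmul_msmul: "msmul c (msmul d A) = msmul (c*d) A"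
  by (auto simp: msmul_def mult.assoc)

lemma bracket_eq: "bracket n A B = madd (mmul n A B) (msmul (-1) (mmul n B A))"
  by (auto simp: bracket_def madd_def msmul_def)

lemma mtrace_madd: "mtrace n (madd A B) = mtrace n A + mtrace n B"
  by (simp add: mtrace_def madd_def sum.distrib)

lemma mtrace_msmul: "mtrace n (msmul c A) = c * mtrace n A"
  by (simp add: mtrace_def msmul_def sum_distrib_left)

lemma mtrace_mat_unit: "mtrace n (mat_unit p q) = (if p = q \<and> p < dimN n then 1 else 0)"
  by (auto simp: mtrace_def mat_unit_def intro: sum.neutral)

lemma mtrace_mzero: "mtrace n mzero = 0"
  by (simp add: mtrace_def mzero_def)

lemma mmul_mzero: "mmul n A mzero = mzero" "mmul n mzero A = mzero"
  by (auto simp: mmul_def mzero_def)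
lemmas mat_unit_calculus = mmul_madd_left mmul_madd_right mmul_msmul_left mmul_msmul_right
  mmul_mat_unit msmul_madd msmul_msmul bracket_eq mtrace_madd mtrace_msmul mtrace_mat_unit
  mtrace_mzero mmul_mzero

lemma dualidx_lt: "i < dimN n \<Longrightarrow> dualidx n i < dimN n"
  by (auto simp: dualidx_def dimN_def)

lemma dualidx_sym: "i < dimN n \<Longrightarrow> j < dimN n \<Longrightarrow> j = dualidx n i \<longleftrightarrow> i = dualidx n j"
  by (auto simp: dualidx_def dimN_def)

lemma dualidx_dualidx: "i < dimN n \<Longrightarrow> dualidx n (dualidx n i) = i"
  by (auto simp: dualidx_def dimN_def)

lemma mmul_mtrans_Jform:
  "mmul n (mtrans A) (Jform n) i j = (if j < dimN n then A (dualidx n j) i else 0)"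
proof (cases "j < dimN n")
  case True
  have "mmul n (mtrans A) (Jform n) i j = (\<Sum>k<dimN n. if k = dualidx n j then A k i else 0)"
    unfolding mmul_def mtrans_def Jform_def
    by (rule sum.cong) (use True dualidx_sym[of _ n j] in auto)
  then show ?thesis using True dualidx_lt[OF True] by simp
qed (simp add: mmul_def Jform_def)

lemma mmul_Jform:
  "mmul n (Jform n) A i j = (if i < dimN n then A (dualidx n i) j else 0)"
proof (cases "i < dimN n")
  case True
  have "mmul n (Jform n) A i j = (\<Sum>k<dimN n. if k = dualidx n i then A k j else 0)"
    unfolding mmul_def Jform_def by (rule sum.cong) (use True in auto)
  then show ?thesis using True dualidx_lt[OF True] by simp
qed (simp add: mmul_def Jform_def)

lemma soalg_iff: "A \<in> soalg n \<longleftrightarrow> supp_in n A \<and>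
   (\<forall>i<dimN n. \<forall>j<dimN n. A (dualidx n j) i + A (dualidx n i) j = 0)"
  unfolding soalg_def madd_def supp_in_def
  by (auto simp: mmul_mtrans_Jform mmul_Jform)

lemma soalg_madd: "A \<in> soalg n \<Longrightarrow> B \<in> soalg n \<Longrightarrow> madd A B \<in> soalg n"
  unfolding soalg_iff supp_in_def madd_def
  by (simp add: algebra_simps)

lemma mzero_soalg: "mzero \<in> soalg n"
  by (simp add: soalg_iff supp_in_def mzero_def)

lemma so_vec_soalg:
  assumes "p < dimN n" "q < dimN n"
  shows "so_vec n p q \<in> soalg n"
  unfolding soalg_iff
proof (intro conjI allI impI)
  show "supp_in n (so_vec n p q)"
    using assms dualidx_lt[OF assms(1)] dualidx_lt[OF assms(2)]
    by (auto simp: supp_in_def so_vec_def madd_def msmul_def mat_unit_def)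
  fix i j assume i: "i < dimN n" and j: "j < dimN n"
  have "dualidx n j = p \<longleftrightarrow> j = dualidx n p" "dualidx n j = dualidx n q \<longleftrightarrow> j = q"
    using dualidx_sym[OF assms(1) j] dualidx_dualidx j assms(2) by metis+
  then have sj: "so_vec n p q (dualidx n j) i
      = (if j = dualidx n p \<and> i = q then 1 else 0) - (if j = q \<and> i = dualidx n p then 1 else 0)"
    by (simp add: so_vec_def madd_def msmul_def mat_unit_def)
  have "dualidx n i = p \<longleftrightarrow> i = dualidx n p" "dualidx n i = dualidx n q \<longleftrightarrow> i = q"
    using dualidx_sym[OF assms(1) i] dualidx_dualidx i assms(2) by metis+
  then have si: "so_vec n p q (dualidx n i) j
      = (if i = dualidx n p \<and> j = q then 1 else 0) - (if i = q \<and> j = dualidx n p then 1 else 0)"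
    by (simp add: so_vec_def madd_def msmul_def mat_unit_def)
  show "so_vec n p q (dualidx n j) i + so_vec n p q (dualidx n i) j = 0"
    unfolding sj si by (simp add: conj_commute)
qed

lemma soalg_dualidx_diag:
  assumes "A \<in> soalg n" "i < dimN n"
  shows "A (dualidx n i) (dualidx n i) = - A i i"
proof -
  have "A (dualidx n (dualidx n i)) i + A (dualidx n i) (dualidx n i) = 0"
    using assms dualidx_lt[OF assms(2)] unfolding soalg_iff by blast
  then show ?thesis using dualidx_dualidx[OF assms(2)] by (simp add: add_eq_0_iff)
qed

lemma bracket_diagonal:
  assumes "\<forall>i j. i \<noteq> j \<longrightarrow> D i j = 0" "supp_in n X"
  shows "bracket n D X = (\<lambda>i j. (D i i - D j j) * X i j)"
proof (intro ext)
  fix i j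
  have "mmul n D X i j = (\<Sum>k<dimN n. if k = i then D i i * X i j else 0)"
    unfolding mmul_def by (rule sum.cong) (use assms(1) in auto)
  moreover have "mmul n X D i j = (\<Sum>k<dimN n. if k = j then X i j * D j j else 0)"
    unfolding mmul_def by (rule sum.cong) (use assms(1) in auto)
  ultimately show "bracket n D X i j = (D i i - D j j) * X i j"
    using assms(2) by (auto simp: bracket_def supp_in_def algebra_simps)
qed

lemma bracket_diagonal_eq_msmul:
  assumes "\<forall>i j. i \<noteq> j \<longrightarrow> D i j = 0" "supp_in n X"
  shows "bracket n D X = msmul c X \<longleftrightarrow> (\<forall>i j. X i j \<noteq> 0 \<longrightarrow> D i i - D j j = c)"
  unfolding bracket_diagonal[OF assms] msmul_def fun_eq_iff
  by (metis mult_cancel_right)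

lemma cartan_diagonal: "H \<in> cartan n \<Longrightarrow> \<forall>i j. i \<noteq> j \<longrightarrow> H i j = 0"
  by (simp add: cartan_def)

lemma rootspace_iff:
  "X \<in> rootspace n \<alpha> \<longleftrightarrow>
     X \<in> soalg n \<and> (\<forall>H \<in> cartan n. \<forall>i j. X i j \<noteq> 0 \<longrightarrow> H i i - H j j = \<alpha> H)"
  unfolding rootspace_def soalg_def
  using bracket_diagonal_eq_msmul[OF cartan_diagonal] by auto

lemma diagonal_soalg:
  assumes "\<forall>i j. i \<noteq> j \<longrightarrow> D i j = 0" "supp_in n D"
    and "\<forall>i<dimN n. D (dualidx n i) (dualidx n i) = - D i i"
  shows "D \<in> soalg n"
  unfolding soalg_iff
proof (intro conjI allI impI assms(2))
  fix i j assume i: "i < dimN n" and j: "j < dimN n"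
  show "D (dualidx n j) i + D (dualidx n i) j = 0"
  proof (cases "i = dualidx n j")
    case True
    then show ?thesis using assms(3) i dualidx_sym[OF j i] by simp
  next
    case False
    then have "D (dualidx n j) i = 0" "D (dualidx n i) j = 0"
      using assms(1) dualidx_sym[OF j i] by auto
    then show ?thesis by simp
  qed
qed

lemma H0_cartan: "H0 n \<in> cartan n"
proof -
  have "\<forall>i j. i \<noteq> j \<longrightarrow> H0 n i j = 0" "supp_in n (H0 n)"
    by (auto simp: H0_def supp_in_def dimN_def)
  moreover have "\<forall>i<dimN n. H0 n (dualidx n i) (dualidx n i) = - H0 n i i"
    by (auto simp: H0_def dualidx_def dimN_def)
  ultimately show ?thesis by (simp add: cartan_def diagonal_soalg)
qed

lemma grade_iff:
  "X \<in> grade n k \<longleftrightarrow>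
     X \<in> soalg n \<and> (\<forall>i j. X i j \<noteq> 0 \<longrightarrow> H0 n i i - H0 n j j = of_int k)"
  unfolding grade_def soalg_def
  using bracket_diagonal_eq_msmul[OF cartan_diagonal[OF H0_cartan]] by auto

lemma rootspace_subset_grade: "\<alpha> (H0 n) = of_int k \<Longrightarrow> rootspace n \<alpha> \<subseteq> grade n k"
  using H0_cartan by (auto simp: rootspace_iff grade_iff)

lemma rootspace_cong: "(\<And>H. H \<in> cartan n \<Longrightarrow> \<alpha> H = \<beta> H) \<Longrightarrow> rootspace n \<alpha> = rootspace n \<beta>"
  by (auto simp: rootspace_iff)

lemma grade_madd: "A \<in> grade n k \<Longrightarrow> B \<in> grade n k \<Longrightarrow> madd A B \<in> grade n k"
  unfolding grade_iff using soalg_madd[of A n B] by (auto simp: madd_def) (metis add_0)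

lemma mzero_rootspace: "mzero \<in> rootspace n \<alpha>"
  by (simp add: rootspace_iff mzero_soalg) (simp add: mzero_def)

lemma so_vec_rootspace:
  assumes "p < dimN n" "q < dimN n"
  shows "so_vec n p q \<in> rootspace n (\<lambda>H. H p p - H q q)"
  unfolding rootspace_iff
proof (intro conjI ballI allI impI so_vec_soalg assms)
  fix H i j assume H: "H \<in> cartan n" and "so_vec n p q i j \<noteq> 0"
  then consider "i = p" "j = q" | "i = dualidx n q" "j = dualidx n p"
    by (auto simp: so_vec_def madd_def msmul_def mat_unit_def split: if_splits)
  then show "H i i - H j j = H p p - H q q"
    by cases (use H assms soalg_dualidx_diag[of H n] in \<open>auto simp: cartan_def\<close>)
qed

lemma kill_rootspace_eq_0:
  assumes "X \<in> rootspace n \<alpha>" "Y \<in> rootspace n \<beta>" "H \<in> cartan n" "\<alpha> H + \<beta> H \<noteq> 0"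
  shows "kill n X Y = 0"
proof -
  have "X i k * Y k i = 0" for i k
  proof (rule ccontr)
    assume "X i k * Y k i \<noteq> 0"
    then have "\<alpha> H = H i i - H k k" "\<beta> H = H k k - H i i"
      using assms(1-3) by (auto simp: rootspace_iff)
    then show False using assms(4) by simp
  qed
  then show ?thesis by (auto simp: kill_def mtrace_def mmul_def intro!: sum.neutral)
qed

lemma so_vec_diagonal_entry:
  assumes "1 \<le> m" "m \<le> n"
  shows "so_vec n m m i j = (if i = j \<and> i = m then 1 else if i = j \<and> i = n + m then -1 else 0)"
  using assms by (auto simp: so_vec_def madd_def msmul_def mat_unit_def dualidx_def)

lemma so_vec_diagonal_cartan:
  assumes "1 \<le> m" "m \<le> n"
  shows "so_vec n m m \<in> cartan n"
  using assms so_vec_soalg[of m n m] by (simp add: cartan_def so_vec_diagonal_entry dimN_def)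

lemma kill_zroot_vectors_eq_0:
  assumes "(a, b) \<in> zroots n" "(c, d) \<in> zroots n" "(a, b) \<noteq> (c, d)"
    and "X \<in> rootspace n (\<lambda>H. H a a + H b b)" "Y \<in> rootspace n (\<lambda>H. - (H c c + H d d))"
  shows "kill n Y X = 0"
proof -
  have "a \<notin> {c, d} \<or> b \<notin> {c, d}"
    using assms(1-3) by (auto simp: zroots_def)
  then obtain m where m: "m \<in> {a, b}" "m \<notin> {c, d}"
    by blast
  have "1 \<le> m" "m \<le> n" using m assms(1) by (auto simp: zroots_def)
  moreover have
    "- (so_vec n m m c c + so_vec n m m d d) + (so_vec n m m a a + so_vec n m m b b) = 1"
    using m assms(1,2) by (auto simp: zroots_def so_vec_diagonal_entry)
  ultimately show ?thesis
    using kill_rootspace_eq_0[OF assms(5,4) so_vec_diagonal_cartan] by simp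
qed

lemma rootspace_neg_zroot:
  assumes "X \<in> rootspace n (\<lambda>H. - (H a a + H b b))" "1 \<le> a" "a < b" "b \<le> n"
  shows "X = msmul (X (n + b) a) (so_vec n (n + b) a)"
proof (intro ext)
  fix i j
  have support: "i = n + b \<and> j = a \<or> i = n + a \<and> j = b" if "X i j \<noteq> 0"
  proof -
    have "so_vec n m m i i - so_vec n m m j j = - (so_vec n m m a a + so_vec n m m b b)"
      if "m \<in> {a, b}" for m
      using \<open>X i j \<noteq> 0\<close> assms that so_vec_diagonal_cartan[of m n] by (auto simp: rootspace_iff)
    from this[of a] this[of b] show ?thesis
      using assms(2-4) by (simp add: so_vec_diagonal_entry split: if_splits)
  qed
  have "X (dualidx n b) a + X (dualidx n a) b = 0"
    using assms rootspace_iff soalg_iff by (auto simp: dimN_def)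
  then have "X (n + a) b = - X (n + b) a"
    using assms(2-4) by (simp add: dualidx_def add_eq_0_iff add.commute)
  then show "X i j = msmul (X (n + b) a) (so_vec n (n + b) a) i j"
    using support assms(2-4)
    by (auto simp: msmul_def so_vec_def madd_def mat_unit_def dualidx_def add.commute)
qed

lemma finite_zroots: "finite (zroots n)"
  by (rule finite_subset[of _ "{..n} \<times> {..n}"]) (auto simp: zroots_def)

lemma tensor_tens_span: "A \<in> S \<Longrightarrow> B \<in> T \<Longrightarrow> tensor A B \<in> tens_span S T"
  unfolding tens_span_def
  by (rule CollectI, rule exI[of _ 1], rule exI[of _ "\<lambda>_. A"], rule exI[of _ "\<lambda>_. B"]) simp

lemma rootspace_subset_lngamma: "rootspace n (\<lambda>H. H n n) \<subseteq> lngamma n"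
proof
  fix A assume "A \<in> rootspace n (\<lambda>H. H n n)"
  moreover have "A = madd (madd A mzero) (bracket n mzero mzero)"
    by (simp add: bracket_eq mmul_mzero madd_def msmul_def mzero_def)
  ultimately show "A \<in> lngamma n"
    unfolding lngamma_def using mzero_rootspace by blast
qed

lemma tpair_tensor_sum:
  assumes "finite P"
  shows "tpair n (tensor A B) (\<lambda>i j k l. c * (\<Sum>p\<in>P. tensor (F p) (G p) i j k l))
    = c * (\<Sum>p\<in>P. kill n A (F p) * kill n B (G p))"
proof -
  let ?I = "{..<dimN n}"
  have "c * (\<Sum>p\<in>P. kill n A (F p) * kill n B (G p))
    = (2 * of_nat n - 1)^2 * (c * (\<Sum>p\<in>P.
        (\<Sum>k\<in>?I. \<Sum>l\<in>?I. B k l * G p l k) * (\<Sum>i\<in>?I. \<Sum>j\<in>?I. A i j * F p j i)))"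
    by (simp add: kill_def mtrace_def mmul_def sum_distrib_left power2_eq_square mult_ac)
  also have "c * (\<Sum>p\<in>P.
        (\<Sum>k\<in>?I. \<Sum>l\<in>?I. B k l * G p l k) * (\<Sum>i\<in>?I. \<Sum>j\<in>?I. A i j * F p j i))
    = (\<Sum>p\<in>P. \<Sum>i\<in>?I. \<Sum>j\<in>?I. \<Sum>k\<in>?I. \<Sum>l\<in>?I. c * (A i j * F p j i * (B k l * G p l k)))"
    by (simp only: sum_distrib_left sum_distrib_right) (simp add: mult_ac)
  also have "\<dots> = (\<Sum>i\<in>?I. \<Sum>j\<in>?I. \<Sum>k\<in>?I. \<Sum>l\<in>?I.
      \<Sum>p\<in>P. c * (A i j * F p j i * (B k l * G p l k)))"
    by (simp only: sum.swap[where A = P])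
  also have "\<dots> = (\<Sum>i\<in>?I. \<Sum>j\<in>?I. \<Sum>k\<in>?I. \<Sum>l\<in>?I.
      A i j * B k l * (c * (\<Sum>p\<in>P. F p j i * G p l k)))"
    by (simp add: sum_distrib_left mult_ac)
  finally show ?thesis
    by (simp add: tpair_def tensor_def)
qed

lemma tpair_tensor_tau2:
  "tpair n (tensor A B) (tau2 n Xr Xs x) =
     1/2 * (\<Sum>(a, b)\<in>zroots n.
       kill n A (bracket n x (bracket n x (Xs a b))) * kill n B (Xr a b))"
  unfolding tau2_def split_def using finite_zroots by (rule tpair_tensor_sum)

lemma kill_so_vec_ad_square:
  assumes "4 \<le> n"
  shows "kill n (so_vec n n 0) (bracket n (madd (so_vec n 1 0) (so_vec n 2 n))
     (bracket n (madd (so_vec n 1 0) (so_vec n 2 n)) (msmul s (so_vec n (n+2) 1))))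
   = - 4 * (2 * of_nat n - 1) * s"
proof -
  txt \<open>Writing \<open>n = m + 4\<close> lets the simplifier decide every index comparison.\<close>
  obtain m where "n = m + 4" using assms by (metis add.commute le_Suc_ex)
  then show ?thesis
    by (simp add: kill_def so_vec_def dualidx_def dimN_def mat_unit_calculus, simp add: algebra_simps)
qed

lemma tpair_tensor_tau2_zroot:
  assumes "\<forall>(a, b) \<in> zroots n. Xr a b \<in> rootspace n (\<lambda>H. H a a + H b b)"
    and "(c, d) \<in> zroots n" "B \<in> rootspace n (\<lambda>H. - (H c c + H d d))"
  shows "tpair n (tensor A B) (tau2 n Xr Xs x) =
    1/2 * kill n A (bracket n x (bracket n x (Xs c d))) * kill n B (Xr c d)"
proof -
  let ?f = "\<lambda>(a, b). kill n A (bracket n x (bracket n x (Xs a b))) * kill n B (Xr a b)"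
  have "?f p = 0" if p: "p \<in> zroots n - {(c, d)}" for p
  proof -
    obtain a b where "p = (a, b)" by fastforce
    then show ?thesis
      using kill_zroot_vectors_eq_0[of a b n c d "Xr a b" B] assms p by auto
  qed
  then have "sum ?f (zroots n - {(c, d)}) = 0"
    by (rule sum.neutral[OF ballI])
  then show ?thesis
    using sum.remove[OF finite_zroots assms(2), of ?f] by (simp add: tpair_tensor_tau2)
qed

lemma so_vec_eps_n_lngamma: "1 \<le> n \<Longrightarrow> so_vec n n 0 \<in> lngamma n"
proof -
  assume "1 \<le> n"
  have "H 0 0 = 0" if "H \<in> cartan n" for H
    using soalg_dualidx_diag[of H n 0] that by (simp add: cartan_def dualidx_def dimN_def)
  then have "rootspace n (\<lambda>H. H n n - H 0 0) = rootspace n (\<lambda>H. H n n)"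
    by (intro rootspace_cong) simp
  then show ?thesis
    using so_vec_rootspace[of n n 0] rootspace_subset_lngamma \<open>1 \<le> n\<close> by (auto simp: dimN_def)
qed

lemma rootspace_neg_zroot_subset_grade:
  "(a, b) \<in> zroots n \<Longrightarrow> rootspace n (\<lambda>H. - (H a a + H b b)) \<subseteq> grade n (-2)"
  by (rule rootspace_subset_grade) (auto simp: zroots_def H0_def)

lemma so_vec_eps_1_plus_eps_2_minus_eps_n_grade_1:
  assumes "3 \<le> n"
  shows "madd (so_vec n 1 0) (so_vec n 2 n) \<in> grade n 1"
proof (rule grade_madd)
  have "rootspace n (\<lambda>H. H 1 1 - H 0 0) \<subseteq> grade n 1"
    using assms by (intro rootspace_subset_grade) (simp add: H0_def)
  then show "so_vec n 1 0 \<in> grade n 1"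
    using so_vec_rootspace[of 1 n 0] assms by (auto simp: dimN_def)
  have "rootspace n (\<lambda>H. H 2 2 - H n n) \<subseteq> grade n 1"
    using assms by (intro rootspace_subset_grade) (auto simp: H0_def)
  then show "so_vec n 2 n \<in> grade n 1"
    using so_vec_rootspace[of 2 n n] assms by (auto simp: dimN_def)
qed

lemma killing_coefficient_neq_0: "2 * of_nat n - 1 \<noteq> (0 :: complex)"
proof
  assume "2 * of_nat n - 1 = (0 :: complex)"
  then have "of_nat (2 * n) = (of_nat 1 :: complex)" by simp
  then show False by (simp only: of_nat_eq_iff) simp
qed

theorem proposition4p1:
  fixes n :: nat and Xr Xs :: "nat \<Rightarrow> nat \<Rightarrow> cmat"
  assumes "4 \<le> n"
    and "\<forall>(a, b) \<in> zroots n.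
           Xr a b \<in> rootspace n (\<lambda>H. H a a + H b b) \<and> Xr a b \<noteq> mzero \<and>
           Xs a b \<in> rootspace n (\<lambda>H. - (H a a + H b b)) \<and>
           kill n (Xs a b) (Xr a b) = 1"
  shows "\<exists>Y \<in> Vstar n. \<exists>x \<in> grade n 1. tpair n Y (tau2 n Xr Xs x) \<noteq> 0"
proof -
  have z12: "(1, 2) \<in> zroots n" using assms(1) by (auto simp: zroots_def)
  have Xr: "\<forall>(a, b) \<in> zroots n. Xr a b \<in> rootspace n (\<lambda>H. H a a + H b b)"
    using assms(2) by auto
  define A where "A = so_vec n n 0"
  define B where "B = Xs 1 2"
  define x where "x = madd (so_vec n 1 0) (so_vec n 2 n)"
  define s where "s = B (n + 2) 1"
  have B: "B \<in> rootspace n (\<lambda>H. - (H 1 1 + H 2 2))" "kill n B (Xr 1 2) = 1"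
    using assms(2) z12 unfolding B_def by auto
  have B_eq: "B = msmul s (so_vec n (n + 2) 1)"
    using rootspace_neg_zroot[OF B(1)] assms(1) unfolding s_def by simp
  have "s \<noteq> 0"
  proof
    assume "s = 0"
    then have "kill n B (Xr 1 2) = 0" by (simp add: B_eq kill_def mtrace_def mmul_def msmul_def)
    with B(2) show False by simp
  qed
  have "tpair n (tensor A B) (tau2 n Xr Xs x) = 1/2 * kill n A (bracket n x (bracket n x B))"
    using tpair_tensor_tau2_zroot[OF Xr z12 B(1)] B(2) unfolding B_def by simp
  also have "\<dots> = - 2 * (2 * of_nat n - 1) * s"
    using kill_so_vec_ad_square[OF assms(1)] unfolding A_def x_def B_eq by simp
  finally have "tpair n (tensor A B) (tau2 n Xr Xs x) \<noteq> 0"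
    using \<open>s \<noteq> 0\<close> killing_coefficient_neq_0 by simp
  moreover have "tensor A B \<in> Vstar n"
    unfolding Vstar_def A_def using assms(1) B(1) rootspace_neg_zroot_subset_grade[OF z12]
    by (auto intro!: tensor_tens_span so_vec_eps_n_lngamma)
  moreover have "x \<in> grade n 1"
    unfolding x_def by (rule so_vec_eps_1_plus_eps_2_minus_eps_n_grade_1) (use assms(1) in simp)
  ultimately show ?thesis by blast
qed

end
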